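(* Let $K$ be a field, $X$ a finite connected poset, $m$ a positive integer, and $I\subseteq J_m$ an ideal of $I(X,K)$ such that $\dim_K\big(I/(I\cap J_{m+1})\big)=1$. Then there exists a unique $e_{xy}\in J_m\setminus J_{m+1}$ such that every $f\in I\setminus J_{m+1}$ is of the form $f=f(x,y)e_{xy}+j_{xy}$ with $j_{xy}\in J_{m+1}$.
   Context: $I(X,K)$ is the incidence algebra: functions $f:X\times X\to K$ with $f(x,y)=0$ unless $x\le y$, product $(fg)(x,y)=\sum_{x\le t\le y}f(x,t)g(t,y)$; $e_{xy}$ ($x\le y$) is the function equal to $1$ at $(x,y)$ and $0$ elsewhere. $[f,g]=fg-gf$; $J_1=\mathrm{span}_K\{[f,g]: f,g\in I(X,K)\}$ and $J_k=\mathrm{span}_K\{[f,g]: f\in J_1, g\in J_{k-1}\}$ for $k\ge2$ (one has $J_k=\mathrm{span}_K\{e_{xy}: l(\lfloor x,y\rfloor)\ge k\}$, where $l(\lfloor x,y\rfloor)$ is the maximal length of a chain in $\{z:x\le z\le y\}$). Connected means any two elements are joined by a sequence in which consecutive elements are in a covering relation. *)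

theory Defs
  imports Complex_Main "HOL-Library.Function_Algebras"
begin

text \<open>The poset X is the finite type 'a with its order; the field K is the type 'k.
  Addition / zero / negation are pointwise (Function_Algebras); the convolution product
  is the separate constant inc_mult (the pointwise product on functions is NOT used).\<close>

definition inc_alg :: "('a::{finite,order} \<Rightarrow> 'a \<Rightarrow> 'k::field) set" where
  "inc_alg = {f. \<forall>x y. \<not> x \<le> y \<longrightarrow> f x y = 0}"

definition inc_mult :: "('a::{finite,order} \<Rightarrow> 'a \<Rightarrow> 'k::field) \<Rightarrow> ('a \<Rightarrow> 'a \<Rightarrow> 'k) \<Rightarrow> ('a \<Rightarrow> 'a \<Rightarrow> 'k)" where
  "inc_mult f g = (\<lambda>x y. \<Sum>t\<in>{t. x \<le> t \<and> t \<le> y}. f x t * g t y)"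

definition inc_scale :: "'k::field \<Rightarrow> ('a \<Rightarrow> 'a \<Rightarrow> 'k) \<Rightarrow> ('a \<Rightarrow> 'a \<Rightarrow> 'k)" where
  "inc_scale c f = (\<lambda>x y. c * f x y)"

definition commutator :: "('a::{finite,order} \<Rightarrow> 'a \<Rightarrow> 'k::field) \<Rightarrow> ('a \<Rightarrow> 'a \<Rightarrow> 'k) \<Rightarrow> ('a \<Rightarrow> 'a \<Rightarrow> 'k)" where
  "commutator f g = inc_mult f g - inc_mult g f"

definition kspan :: "('a::{finite,order} \<Rightarrow> 'a \<Rightarrow> 'k::field) set \<Rightarrow> ('a \<Rightarrow> 'a \<Rightarrow> 'k) set" where
  "kspan S = module.span inc_scale S"

definition kdim :: "('a::{finite,order} \<Rightarrow> 'a \<Rightarrow> 'k::field) set \<Rightarrow> nat" where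
  "kdim S = vector_space.dim inc_scale S"

text \<open>J_1 = span of commutators; J_(k+1) = span{[f,g] : f in J_1, g in J_k}.
  J 0 is the whole incidence algebra (only J_k with k >= 1 is used).\<close>
fun Jideal :: "nat \<Rightarrow> ('a::{finite,order} \<Rightarrow> 'a \<Rightarrow> 'k::field) set" where
  "Jideal 0 = inc_alg"
| "Jideal (Suc 0) = kspan {commutator f g | f g. f \<in> inc_alg \<and> g \<in> inc_alg}"
| "Jideal (Suc (Suc k)) = kspan {commutator f g | f g. f \<in> Jideal (Suc 0) \<and> g \<in> Jideal (Suc k)}"

definition e_elem :: "'a::{finite,order} \<Rightarrow> 'a \<Rightarrow> ('a \<Rightarrow> 'a \<Rightarrow> 'k::field)" where
  "e_elem x y = (\<lambda>u v. if u = x \<and> v = y then 1 else 0)"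

definition is_inc_ideal :: "('a::{finite,order} \<Rightarrow> 'a \<Rightarrow> 'k::field) set \<Rightarrow> bool" where
  "is_inc_ideal I \<longleftrightarrow> I \<subseteq> inc_alg \<and> 0 \<in> I
     \<and> (\<forall>f\<in>I. \<forall>g\<in>I. f + g \<in> I)
     \<and> (\<forall>c. \<forall>f\<in>I. inc_scale c f \<in> I)
     \<and> (\<forall>f\<in>I. \<forall>a\<in>inc_alg. inc_mult a f \<in> I \<and> inc_mult f a \<in> I)"

definition covers :: "'a::order \<Rightarrow> 'a \<Rightarrow> bool" where
  "covers x y \<longleftrightarrow> x < y \<and> \<not> (\<exists>z. x < z \<and> z < y)"

definition poset_connected :: "'a::order itself \<Rightarrow> bool" where
  "poset_connected _ \<longleftrightarrow> (\<forall>x y::'a. (\<lambda>u v. covers u v \<or> covers v u)\<^sup>*\<^sup>* x y)"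

end

theory Submission
  imports Defs
begin

text \<open>The ideals \<open>J\<^sub>k\<close> are exactly the functions supported on intervals \<open>[x, y]\<close> of
  length at least \<open>k\<close>: commutators add lengths and kill the diagonal, and conversely
  \<open>e\<^sub>x\<^sub>y = [e\<^sub>x\<^sub>z, e\<^sub>z\<^sub>y]\<close> for \<open>x < z \<le> y\<close>.
  An ideal containing \<open>f\<close> with \<open>f(x, y) \<noteq> 0\<close> contains \<open>e\<^sub>x\<^sub>x f e\<^sub>y\<^sub>y = f(x, y) e\<^sub>x\<^sub>y\<close>.
  So if \<open>f(x, y)\<close> and \<open>g(u, v)\<close> are nonzero for \<open>f, g \<in> I\<close> at two different positions of
  length exactly \<open>m\<close>, then \<open>e\<^sub>x\<^sub>y\<close> and \<open>e\<^sub>u\<^sub>v\<close> are independent modulo \<open>I \<inter> J\<^sub>m\<^sub>+\<^sub>1\<close>, since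
  that space vanishes at both positions; this contradicts the codimension being one.\<close>

interpretation V: vector_space "inc_scale :: 'k::field \<Rightarrow> ('a \<Rightarrow> 'a \<Rightarrow> 'k) \<Rightarrow> _"
  by unfold_locales (auto simp: inc_scale_def fun_eq_iff algebra_simps)

lemma sum_fun_apply: "sum f A x = (\<Sum>a\<in>A. f a x)"
  by (induct A rule: infinite_finite_induct) auto

lemma e_elem_apply: "e_elem x y u v = (if u = x \<and> v = y then 1 else 0)"
  by (simp add: e_elem_def)

lemma inc_expansion:
  "(f :: 'a::{finite,order} \<Rightarrow> 'a \<Rightarrow> 'k::field) = (\<Sum>(x, y)\<in>UNIV. inc_scale (f x y) (e_elem x y))"
proof (intro ext)
  fix u v
  have "(\<Sum>(x, y)\<in>UNIV. inc_scale (f x y) (e_elem x y)) u v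
      = (\<Sum>p\<in>UNIV. if p = (u, v) then f u v else 0)"
    unfolding sum_fun_apply by (intro sum.cong) (auto simp: inc_scale_def e_elem_apply split: if_splits)
  then show "f u v = (\<Sum>(x, y)\<in>UNIV. inc_scale (f x y) (e_elem x y)) u v"
    by simp
qed

lemma e_elem_eq_iff: "e_elem x y = e_elem u v \<longleftrightarrow> x = u \<and> y = v"
  by (auto simp: e_elem_def fun_eq_iff)

interpretation F: finite_dimensional_vector_space
  "inc_scale :: 'k::field \<Rightarrow> ('a::{finite,order} \<Rightarrow> 'a \<Rightarrow> 'k) \<Rightarrow> _" "range (case_prod e_elem)"
proof
  let ?B = "range (case_prod e_elem) :: ('a \<Rightarrow> 'a \<Rightarrow> 'k) set"
  show "finite ?B"
    by simp
  show "V.span ?B = UNIV"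
  proof (intro set_eqI iffI UNIV_I)
    fix f :: "'a \<Rightarrow> 'a \<Rightarrow> 'k"
    have "(\<Sum>(x, y)\<in>UNIV. inc_scale (f x y) (e_elem x y)) \<in> V.span ?B"
      by (intro V.span_sum) (auto intro: V.span_scale V.span_base)
    then show "f \<in> V.span ?B"
      by (subst inc_expansion)
  qed
  show "V.independent ?B"
  proof (rule V.independent_if_scalars_zero)
    fix c w
    assume sum0: "(\<Sum>v\<in>?B. inc_scale (c v) v) = 0" and "w \<in> ?B"
    then obtain x y where w: "w = e_elem x y"
      by auto
    have "(\<Sum>v\<in>?B. inc_scale (c v) v) x y = (\<Sum>v\<in>?B. if v = w then c w else 0)"
      unfolding sum_fun_apply w
      by (intro sum.cong) (auto simp: inc_scale_def e_elem_apply e_elem_eq_iff)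
    with sum0 \<open>w \<in> ?B\<close> show "c w = 0"
      by simp
  qed simp
qed

text \<open>Encodes \<open>x \<le> y \<and> l(\<lfloor>x, y\<rfloor>) \<ge> k\<close>.\<close>

fun interval_len_ge :: "nat \<Rightarrow> 'a::order \<Rightarrow> 'a \<Rightarrow> bool" where
  "interval_len_ge 0 x y \<longleftrightarrow> x \<le> y"
| "interval_len_ge (Suc k) x y \<longleftrightarrow> (\<exists>z. x < z \<and> interval_len_ge k z y)"

lemma interval_len_ge_imp_le: "interval_len_ge k x y \<Longrightarrow> x \<le> y"
  by (induct k arbitrary: x) (auto intro: order.trans less_imp_le)

lemma interval_len_ge_Suc_0: "interval_len_ge (Suc 0) x y \<longleftrightarrow> x < y"
  by (auto intro: less_le_trans)

lemma interval_len_ge_trans: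
  "interval_len_ge a x t \<Longrightarrow> interval_len_ge b t y \<Longrightarrow> interval_len_ge (a + b) x y"
proof (induct a arbitrary: x)
  case 0
  then show ?case
    by (cases b) (auto intro: order.trans le_less_trans)
qed auto

definition supp_ge :: "nat \<Rightarrow> ('a::order \<Rightarrow> 'a \<Rightarrow> 'k::zero) set" where
  "supp_ge k = {f. \<forall>x y. f x y \<noteq> 0 \<longrightarrow> interval_len_ge k x y}"

lemma subspace_supp_ge: "V.subspace (supp_ge k)"
  unfolding V.subspace_def supp_ge_def by (auto simp: inc_scale_def) (metis add_0)

lemma supp_ge_0: "supp_ge 0 = inc_alg"
  unfolding inc_alg_def supp_ge_def by auto

lemma e_elem_in_supp_ge_iff: "e_elem x y \<in> supp_ge k \<longleftrightarrow> interval_len_ge k x y"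
  by (simp add: supp_ge_def e_elem_apply)

lemma inc_mult_supp_ge:
  assumes "f \<in> supp_ge a" "g \<in> supp_ge b"
  shows "inc_mult (f :: 'a::{finite,order} \<Rightarrow> 'a \<Rightarrow> 'k::field) g \<in> supp_ge (a + b)"
  unfolding supp_ge_def
proof (intro CollectI allI impI)
  fix x y
  assume "inc_mult f g x y \<noteq> 0"
  then obtain t where "f x t * g t y \<noteq> 0"
    unfolding inc_mult_def by (rule sum.not_neutral_contains_not_neutral)
  then have "f x t \<noteq> 0" "g t y \<noteq> 0"
    by simp_all
  then show "interval_len_ge (a + b) x y"
    using assms unfolding supp_ge_def by (blast intro: interval_len_ge_trans)
qed

lemma commutator_diag: "commutator f g x x = 0"
proof -
  have "{t. x \<le> t \<and> t \<le> x} = {x}"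
    by auto
  then show ?thesis
    by (simp add: commutator_def inc_mult_def)
qed

lemma commutator_supp_ge:
  assumes "f \<in> supp_ge a" "g \<in> supp_ge b"
  shows "commutator (f :: 'a::{finite,order} \<Rightarrow> 'a \<Rightarrow> 'k::field) g \<in> supp_ge (a + b)"
proof -
  have "inc_mult g f \<in> supp_ge (a + b)"
    using inc_mult_supp_ge[OF assms(2,1)] by (simp add: add.commute)
  then show ?thesis
    unfolding commutator_def using inc_mult_supp_ge[OF assms] subspace_supp_ge V.subspace_diff
    by blast
qed

lemma commutator_supp_ge_1:
  assumes "f \<in> inc_alg" "g \<in> inc_alg"
  shows "commutator (f :: 'a::{finite,order} \<Rightarrow> 'a \<Rightarrow> 'k::field) g \<in> supp_ge (Suc 0)"
proof -
  have "commutator f g \<in> supp_ge 0"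
    using commutator_supp_ge[of f 0 g 0] assms by (simp add: supp_ge_0)
  then show ?thesis
    using commutator_diag[of f g] unfolding supp_ge_def interval_len_ge_Suc_0
    by (auto simp: order.order_iff_strict)
qed

lemma Jideal_1_subset_supp_ge:
  "Jideal (Suc 0) \<subseteq> (supp_ge (Suc 0) :: ('a::{finite,order} \<Rightarrow> 'a \<Rightarrow> 'k::field) set)"
  unfolding Jideal.simps kspan_def
  by (intro V.span_minimal subspace_supp_ge) (auto intro: commutator_supp_ge_1)

lemma Jideal_Suc_subset_supp_ge:
  "Jideal (Suc k) \<subseteq> (supp_ge (Suc k) :: ('a::{finite,order} \<Rightarrow> 'a \<Rightarrow> 'k::field) set)"
proof (induct k)
  case 0
  then show ?case
    by (rule Jideal_1_subset_supp_ge)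
next
  case (Suc k)
  have "commutator f g \<in> supp_ge (Suc 0 + Suc k)"
    if "f \<in> Jideal (Suc 0)" "g \<in> Jideal (Suc k)" for f g :: "'a \<Rightarrow> 'a \<Rightarrow> 'k"
    using that Suc Jideal_1_subset_supp_ge by (blast intro: commutator_supp_ge)
  then show ?case
    unfolding Jideal.simps(3)[of k] kspan_def
    by (intro V.span_minimal subspace_supp_ge) auto
qed

lemma inc_mult_e_elem_left:
  "inc_mult (e_elem a b) (g :: 'a::{finite,order} \<Rightarrow> 'a \<Rightarrow> 'k::field)
     = (\<lambda>x y. if x = a \<and> a \<le> b \<and> b \<le> y then g b y else 0)"
proof (intro ext)
  fix x y
  have "inc_mult (e_elem a b) g x y
      = (\<Sum>t\<in>{t. x \<le> t \<and> t \<le> y}. if t = b then (if x = a then g b y else 0) else 0)"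
    unfolding inc_mult_def e_elem_def by (rule sum.cong) auto
  then show "inc_mult (e_elem a b) g x y = (if x = a \<and> a \<le> b \<and> b \<le> y then g b y else 0)"
    by auto
qed

lemma inc_mult_e_elem_right:
  "inc_mult (g :: 'a::{finite,order} \<Rightarrow> 'a \<Rightarrow> 'k::field) (e_elem a b)
     = (\<lambda>x y. if y = b \<and> x \<le> a \<and> a \<le> b then g x a else 0)"
proof (intro ext)
  fix x y
  have "inc_mult g (e_elem a b) x y
      = (\<Sum>t\<in>{t. x \<le> t \<and> t \<le> y}. if t = a then (if y = b then g x a else 0) else 0)"
    unfolding inc_mult_def e_elem_def by (rule sum.cong) auto
  then show "inc_mult g (e_elem a b) x y = (if y = b \<and> x \<le> a \<and> a \<le> b then g x a else 0)"
    by auto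
qed

lemma commutator_e_elem:
  assumes "a \<le> z" "z \<le> b" "a \<noteq> b"
  shows "commutator (e_elem a z) (e_elem z b) = (e_elem a b :: 'a::{finite,order} \<Rightarrow> 'a \<Rightarrow> 'k::field)"
  using assms by (auto simp: commutator_def inc_mult_e_elem_left fun_eq_iff e_elem_apply)

lemma e_elem_in_inc_alg: "a \<le> b \<Longrightarrow> e_elem a b \<in> inc_alg"
  by (simp add: inc_alg_def e_elem_apply)

lemma e_elem_in_Jideal_1:
  assumes "a < b"
  shows "(e_elem a b :: 'a::{finite,order} \<Rightarrow> 'a \<Rightarrow> 'k::field) \<in> Jideal (Suc 0)"
proof -
  have "e_elem a b \<in> inc_alg" "e_elem b b \<in> inc_alg"
    using assms by (simp_all add: e_elem_in_inc_alg)
  then have "commutator (e_elem a b) (e_elem b b) \<in> (Jideal (Suc 0) :: ('a \<Rightarrow> 'a \<Rightarrow> 'k) set)"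
    unfolding Jideal.simps kspan_def by (intro V.span_base) blast
  with assms show ?thesis
    by (simp add: commutator_e_elem)
qed

lemma e_elem_in_Jideal:
  "interval_len_ge (Suc k) a b \<Longrightarrow>
     (e_elem a b :: 'a::{finite,order} \<Rightarrow> 'a \<Rightarrow> 'k::field) \<in> Jideal (Suc k)"
proof (induct k arbitrary: a)
  case 0
  then show ?case
    using interval_len_ge_Suc_0 by (blast intro: e_elem_in_Jideal_1)
next
  case (Suc k)
  then obtain z where z: "a < z" "interval_len_ge (Suc k) z b"
    by auto
  have "commutator (e_elem a z) (e_elem z b) \<in> (Jideal (Suc (Suc k)) :: ('a \<Rightarrow> 'a \<Rightarrow> 'k) set)"
    unfolding Jideal.simps(3)[of k] kspan_def using z Suc.hyps
    by (intro V.span_base) (blast intro: e_elem_in_Jideal_1)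
  moreover have "z \<le> b"
    using z(2) by (rule interval_len_ge_imp_le)
  ultimately show ?case
    using z(1) by (simp add: commutator_e_elem)
qed

lemma supp_ge_subset_Jideal:
  "supp_ge (Suc k) \<subseteq> (Jideal (Suc k) :: ('a::{finite,order} \<Rightarrow> 'a \<Rightarrow> 'k::field) set)"
proof
  fix f :: "'a \<Rightarrow> 'a \<Rightarrow> 'k"
  assume f: "f \<in> supp_ge (Suc k)"
  have J: "V.subspace (Jideal (Suc k) :: ('a \<Rightarrow> 'a \<Rightarrow> 'k) set)"
    by (cases k) (simp_all add: kspan_def)
  have "inc_scale (f x y) (e_elem x y) \<in> Jideal (Suc k)" for x y
  proof (cases "f x y = 0")
    case True
    then show ?thesis
      using V.subspace_0[OF J] by (simp add: inc_scale_def zero_fun_def)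
  next
    case False
    then show ?thesis
      using f by (intro V.subspace_scale[OF J] e_elem_in_Jideal) (simp add: supp_ge_def)
  qed
  then show "f \<in> Jideal (Suc k)"
    by (subst inc_expansion) (auto intro: V.subspace_sum[OF J])
qed

lemma Jideal_eq_supp_ge:
  "Jideal k = (supp_ge k :: ('a::{finite,order} \<Rightarrow> 'a \<Rightarrow> 'k::field) set)"
  by (cases k) (simp_all add: supp_ge_0 subset_antisym Jideal_Suc_subset_supp_ge supp_ge_subset_Jideal)

lemma e_elem_in_ideal:
  assumes I: "is_inc_ideal I" and f: "f \<in> I" "f x y \<noteq> 0"
  shows "(e_elem x y :: 'a::{finite,order} \<Rightarrow> 'a \<Rightarrow> 'k::field) \<in> I"
proof -
  have "x \<le> y"
    using I f unfolding is_inc_ideal_def inc_alg_def by blast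
  then have "inc_mult (inc_mult (e_elem x x) f) (e_elem y y) = inc_scale (f x y) (e_elem x y)"
    by (auto simp: inc_mult_e_elem_left inc_mult_e_elem_right fun_eq_iff inc_scale_def e_elem_apply)
  moreover have "inc_mult (inc_mult (e_elem x x) f) (e_elem y y) \<in> I"
    using I f unfolding is_inc_ideal_def by (simp add: e_elem_in_inc_alg)
  ultimately have "inc_scale (inverse (f x y)) (inc_scale (f x y) (e_elem x y)) \<in> I"
    using I unfolding is_inc_ideal_def by metis
  with f show ?thesis
    by simp
qed

lemma subspace_vanishing_at: "V.subspace {g. g x y = 0}"
  by (auto simp: V.subspace_def inc_scale_def)

lemma kdim_insert_two_e_elem:
  assumes "W \<subseteq> I" "e_elem x y \<in> I" "e_elem u v \<in> I" "(x, y) \<noteq> (u, v)"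
    and "\<forall>g\<in>W. g x y = 0 \<and> g u v = 0"
  shows "kdim W + 2 \<le> kdim (I :: ('a::{finite,order} \<Rightarrow> 'a \<Rightarrow> 'k::field) set)"
proof -
  let ?e = "e_elem x y :: 'a \<Rightarrow> 'a \<Rightarrow> 'k" and ?e' = "e_elem u v :: 'a \<Rightarrow> 'a \<Rightarrow> 'k"
  have "V.span W \<subseteq> {g. g u v = 0}"
    using assms(5) by (intro V.span_minimal subspace_vanishing_at) auto
  then have e': "?e' \<notin> V.span W"
    by (auto simp: e_elem_apply)
  have "V.span (insert ?e' W) \<subseteq> {g. g x y = 0}"
    using assms(4,5) by (intro V.span_minimal subspace_vanishing_at) (auto simp: e_elem_apply)
  then have e: "?e \<notin> V.span (insert ?e' W)"
    by (auto simp: e_elem_apply)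
  have "kdim W + 2 = V.dim (insert ?e (insert ?e' W))"
    using e e' by (simp add: kdim_def F.dim_insert)
  also have "\<dots> \<le> kdim I"
    unfolding kdim_def using assms(1-3) by (intro F.dim_subset) auto
  finally show ?thesis .
qed

lemma top_layer_entry_unique:
  fixes I :: "('a::{finite,order} \<Rightarrow> 'a \<Rightarrow> 'k::field) set"
  assumes "kdim I = kdim (I \<inter> supp_ge (Suc m)) + 1"
    and "e_elem x y \<in> I" "\<not> interval_len_ge (Suc m) x y"
    and "e_elem u v \<in> I" "\<not> interval_len_ge (Suc m) u v"
  shows "(u, v) = (x, y)"
proof (rule ccontr)
  assume "(u, v) \<noteq> (x, y)"
  with assms(2-5) have "kdim (I \<inter> supp_ge (Suc m)) + 2 \<le> kdim I"
    unfolding supp_ge_def by (intro kdim_insert_two_e_elem) blast+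
  with assms(1) show False
    by simp
qed

lemma top_layer_decomposition:
  assumes I: "is_inc_ideal I" and dim: "kdim I = kdim (I \<inter> supp_ge (Suc m)) + 1"
    and xy: "e_elem x y \<in> I" "\<not> interval_len_ge (Suc m) x y"
    and g: "g \<in> I"
  shows "g - inc_scale (g x y) (e_elem x y) \<in> (supp_ge (Suc m) :: ('a::{finite,order} \<Rightarrow> 'a \<Rightarrow> 'k::field) set)"
  unfolding supp_ge_def
proof (intro CollectI allI impI)
  fix u v
  assume "(g - inc_scale (g x y) (e_elem x y)) u v \<noteq> 0"
  then have "(u, v) \<noteq> (x, y)" "g u v \<noteq> 0"
    by (auto simp: inc_scale_def e_elem_apply split: if_splits)
  with e_elem_in_ideal[OF I g] top_layer_entry_unique[OF dim xy] show "interval_len_ge (Suc m) u v"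
    by blast
qed

lemma top_layer_representative_unique:
  fixes I :: "('a::{finite,order} \<Rightarrow> 'a \<Rightarrow> 'k::field) set"
  assumes "e_elem x y \<in> I" "\<not> interval_len_ge (Suc m) x y"
    and "\<forall>g \<in> I - supp_ge (Suc m). \<exists>j \<in> supp_ge (Suc m). g = inc_scale (g u v) (e_elem u v) + j"
  shows "(u, v) = (x, y)"
proof -
  have "e_elem x y \<in> I - supp_ge (Suc m)"
    using assms(1,2) by (simp add: e_elem_in_supp_ge_iff)
  with assms(3) obtain j :: "'a \<Rightarrow> 'a \<Rightarrow> 'k" where j: "j \<in> supp_ge (Suc m)"
    "e_elem x y = inc_scale (e_elem x y u v) (e_elem u v) + j"
    by blast
  have "j x y = 0"
    using j(1) assms(2) unfolding supp_ge_def by blast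
  moreover have "e_elem x y x y = e_elem x y u v * e_elem u v x y + j x y"
    using fun_cong[OF fun_cong[OF j(2), of x], of y] by (simp add: inc_scale_def)
  ultimately show ?thesis
    by (cases "x = u \<and> y = v") (auto simp: e_elem_apply)
qed

theorem proposition3p6:
  fixes I :: "('a::{finite,order} \<Rightarrow> 'a \<Rightarrow> 'k::field) set" and m :: nat
  assumes "poset_connected TYPE('a)"
    and "m \<ge> 1"
    and "is_inc_ideal I"
    and "I \<subseteq> Jideal m"
    and "kdim I = kdim (I \<inter> Jideal (Suc m)) + 1"
  shows "\<exists>!(x, y). x \<le> y \<and> e_elem x y \<in> Jideal m - Jideal (Suc m)
           \<and> (\<forall>f \<in> I - Jideal (Suc m). \<exists>j \<in> Jideal (Suc m). f = inc_scale (f x y) (e_elem x y) + j)"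
proof -
  note J = Jideal_eq_supp_ge
  have dim: "kdim I = kdim (I \<inter> supp_ge (Suc m)) + 1"
    using assms(5) by (simp add: J)
  then have "\<not> I \<subseteq> supp_ge (Suc m)"
    by (auto simp: Int_absorb2)
  then obtain f x y where f: "f \<in> I" "f x y \<noteq> 0" and top: "\<not> interval_len_ge (Suc m) x y"
    unfolding supp_ge_def by blast
  have len: "interval_len_ge m x y"
    using f assms(4) by (auto simp: J supp_ge_def)
  have eI: "e_elem x y \<in> I"
    using e_elem_in_ideal[OF assms(3) f] .
  have decomp: "\<exists>j \<in> supp_ge (Suc m). g = inc_scale (g x y) (e_elem x y) + j" if "g \<in> I" for g
    using top_layer_decomposition[OF assms(3) dim eI top that] by force
  text \<open>The first \<open>e_elem x y\<close> in the statement has an arbitrary field as codomain,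
    so \<open>J\<close> is used there at a type other than that of \<open>I\<close>.\<close>
  show ?thesis
    unfolding J using len top eI decomp top_layer_representative_unique[OF eI top]
    by (auto simp: e_elem_in_supp_ge_iff interval_len_ge_imp_le intro!: ex1I[of _ "(x, y)"])
qed

end
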